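(* Let $P,Q\in\Gamma_n$ and $0<r\le R$ with $r\le p_i/q_i\le R$ for all $i$. Let $s,t\in\mathbb{R}$. If $s+t\le1$ and $t\le-1$, then $$\frac{1}{4r^{t+1}}\Big(\frac{r+1}{2r}\Big)^{s-2}\Phi_t(P\|Q)\le\Omega_s(P\|Q)\le\frac{1}{4R^{t+1}}\Big(\frac{R+1}{2R}\Big)^{s-2}\Phi_t(P\|Q).$$ If $s+t\ge1$ and $t\ge-1$, then $$\frac{1}{4R^{t+1}}\Big(\frac{R+1}{2R}\Big)^{s-2}\Phi_t(P\|Q)\le\Omega_s(P\|Q)\le\frac{1}{4r^{t+1}}\Big(\frac{r+1}{2r}\Big)^{s-2}\Phi_t(P\|Q).$$
   Context: $\Gamma_n=\{P=(p_1,\dots,p_n): p_i>0,\ \sum_i p_i=1\}$, $n\ge2$. For $P,Q\in\Gamma_n$ and $s\in\mathbb{R}$: $\Phi_s(P\|Q)=[s(s-1)]^{-1}\big[\sum_i p_i^s q_i^{1-s}-1\big]$ for $s\ne0,1$; $\Phi_0(P\|Q)=\sum_i q_i\ln(q_i/p_i)$; $\Phi_1(P\|Q)=\sum_i p_i\ln(p_i/q_i)$. $\Omega_s(P\|Q)=[s(s-1)]^{-1}\big[\sum_i p_i\big(\frac{p_i+q_i}{2p_i}\big)^s-1\big]$ for $s\ne0,1$; $\Omega_0(P\|Q)=\sum_i p_i\ln\frac{2p_i}{p_i+q_i}$; $\Omega_1(P\|Q)=\sum_i\frac{p_i+q_i}{2}\ln\frac{p_i+q_i}{2p_i}$. *)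

theory Defs
  imports Complex_Main
begin

definition Gamma :: "nat \<Rightarrow> (nat \<Rightarrow> real) set" where
  "Gamma n = {p. (\<forall>i<n. p i > 0) \<and> (\<Sum>i<n. p i) = 1}"

definition Phi :: "real \<Rightarrow> nat \<Rightarrow> (nat \<Rightarrow> real) \<Rightarrow> (nat \<Rightarrow> real) \<Rightarrow> real" where
  "Phi s n p q =
     (if s = 0 then (\<Sum>i<n. q i * ln (q i / p i))
      else if s = 1 then (\<Sum>i<n. p i * ln (p i / q i))
      else ((\<Sum>i<n. p i powr s * q i powr (1 - s)) - 1) / (s * (s - 1)))"

definition Omega :: "real \<Rightarrow> nat \<Rightarrow> (nat \<Rightarrow> real) \<Rightarrow> (nat \<Rightarrow> real) \<Rightarrow> real" where
  "Omega s n p q =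
     (if s = 0 then (\<Sum>i<n. p i * ln (2 * p i / (p i + q i)))
      else if s = 1 then (\<Sum>i<n. (p i + q i) / 2 * ln ((p i + q i) / (2 * p i)))
      else ((\<Sum>i<n. p i * ((p i + q i) / (2 * p i)) powr s) - 1) / (s * (s - 1)))"

end

theory Submission
  imports Defs "HOL-Analysis.Convex"
begin

text \<open>Both divergences are f-divergences \<open>\<Sum>i. q i * f (p i / q i)\<close> with generators vanishing
at 1: \<open>\<Phi>\<^sub>t\<close> with \<open>phi t\<close>, where \<open>phi t'' x = x powr (t - 2)\<close>, and \<open>\<Omega>\<^sub>s\<close> with \<open>psi s\<close>, where
\<open>psi s'' x = ((x + 1) / (2 * x)) powr (s - 2) / (4 * x ^ 3)\<close>. The ratio \<open>psi s'' / phi t''\<close> is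
exactly the constant in the bounds, evaluated at \<open>x\<close>, and it is monotone in \<open>x\<close> in either
parameter regime. Hence for \<open>c\<close> its value at \<open>r\<close> or \<open>R\<close>, \<open>psi s - c * phi t\<close> is convex or concave on
\<open>[r, R]\<close>, which contains 1 and all ratios \<open>p i / q i\<close>. Comparing it with its tangent at 1 and
using \<open>\<Sum>i. q i * (p i / q i - 1) = 0\<close> gives the sign of its f-divergence \<open>\<Omega>\<^sub>s - c * \<Phi>\<^sub>t\<close>.\<close>

definition f_divergence :: "(real \<Rightarrow> real) \<Rightarrow> nat \<Rightarrow> (nat \<Rightarrow> real) \<Rightarrow> (nat \<Rightarrow> real) \<Rightarrow> real" where
  "f_divergence f n p q = (\<Sum>i<n. q i * f (p i / q i))"

lemma ratio_bounds_enclose_one: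
  assumes p: "p \<in> Gamma n" and q: "q \<in> Gamma n"
    and ratio: "\<And>i. i < n \<Longrightarrow> r \<le> p i / q i \<and> p i / q i \<le> R"
  shows "r \<le> 1" "1 \<le> R"
proof -
  have q_pos: "0 < q i" if "i < n" for i
    using q that by (simp add: Gamma_def)
  have p_eq: "p i = q i * (p i / q i)" if "i < n" for i
    using q_pos[OF that] by simp
  have "r = (\<Sum>i<n. q i * r)"
    using q by (simp add: Gamma_def flip: sum_distrib_right)
  also have "\<dots> \<le> (\<Sum>i<n. p i)"
    using ratio q_pos p_eq by (intro sum_mono) (metis lessThan_iff mult_left_mono less_imp_le)
  finally show "r \<le> 1"
    using p by (simp add: Gamma_def)
  have "1 = (\<Sum>i<n. p i)"
    using p by (simp add: Gamma_def)
  also have "\<dots> \<le> (\<Sum>i<n. q i * R)"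
    using ratio q_pos p_eq by (intro sum_mono) (metis lessThan_iff mult_left_mono less_imp_le)
  also have "\<dots> = R"
    using q by (simp add: Gamma_def flip: sum_distrib_right)
  finally show "1 \<le> R" .
qed

lemma f_divergence_mono:
  fixes f g f' g' f'' g'' :: "real \<Rightarrow> real"
  assumes p: "p \<in> Gamma n" and q: "q \<in> Gamma n"
    and ratio: "\<And>i. i < n \<Longrightarrow> r \<le> p i / q i \<and> p i / q i \<le> R"
    and f_deriv: "\<And>x. x \<in> {r..R} \<Longrightarrow> (f has_real_derivative f' x) (at x)"
    and f_deriv2: "\<And>x. x \<in> {r..R} \<Longrightarrow> (f' has_real_derivative f'' x) (at x)"
    and g_deriv: "\<And>x. x \<in> {r..R} \<Longrightarrow> (g has_real_derivative g' x) (at x)"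
    and g_deriv2: "\<And>x. x \<in> {r..R} \<Longrightarrow> (g' has_real_derivative g'' x) (at x)"
    and deriv2_le: "\<And>x. x \<in> {r..R} \<Longrightarrow> f'' x \<le> g'' x"
    and "f 1 = g 1"
  shows "f_divergence f n p q \<le> f_divergence g n p q"
proof -
  define c where "c = g' 1 - f' 1"
  have one: "1 \<in> {r..R}"
    using ratio_bounds_enclose_one[OF p q ratio] by simp
  have tangent: "c * (x - 1) \<le> g x - f x" if "x \<in> {r..R}" for x
    using f''_imp_f'[of "{r..R}" "\<lambda>x. g x - f x" "\<lambda>x. g' x - f' x" "\<lambda>x. g'' x - f'' x" 1 x]
      f_deriv f_deriv2 g_deriv g_deriv2 deriv2_le one that \<open>f 1 = g 1\<close>
    by (auto simp: c_def intro!: DERIV_diff)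
  have q_pos: "0 < q i" if "i < n" for i
    using q that by (simp add: Gamma_def)
  have "0 = (\<Sum>i<n. c * (p i - q i))"
    using p q by (simp add: Gamma_def sum_subtractf flip: sum_distrib_left)
  also have "\<dots> = (\<Sum>i<n. q i * (c * (p i / q i - 1)))"
    by (intro sum.cong) (auto simp: field_simps dest: q_pos)
  also have "\<dots> \<le> (\<Sum>i<n. q i * (g (p i / q i) - f (p i / q i)))"
    using ratio tangent by (intro sum_mono mult_left_mono) (auto dest: q_pos)
  finally show ?thesis
    by (simp add: f_divergence_def right_diff_distrib sum_subtractf)
qed

definition phi :: "real \<Rightarrow> real \<Rightarrow> real" where
  "phi t x = (if t = 0 then - ln x else if t = 1 then x * ln x else (x powr t - 1) / (t * (t - 1)))"

definition phi' :: "real \<Rightarrow> real \<Rightarrow> real" where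
  "phi' t x = (if t = 1 then ln x + 1 else x powr (t - 1) / (t - 1))"

definition psi :: "real \<Rightarrow> real \<Rightarrow> real" where
  "psi s x = (if s = 0 then x * ln (2 * x / (x + 1))
     else if s = 1 then (x + 1) / 2 * ln ((x + 1) / (2 * x))
     else (x * ((x + 1) / (2 * x)) powr s - 1) / (s * (s - 1)))"

definition psi' :: "real \<Rightarrow> real \<Rightarrow> real" where
  "psi' s x = (if s = 0 then ln (2 * x / (x + 1)) + 1 / (x + 1)
     else if s = 1 then ln ((x + 1) / (2 * x)) / 2 - 1 / (2 * x)
     else ((x + 1) / (2 * x)) powr (s - 1) * (x + 1 - s) / (2 * x * s * (s - 1)))"

lemma phi_one [simp]: "phi t 1 = 0"
  by (simp add: phi_def)

lemma psi_one [simp]: "psi s 1 = 0"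
  by (simp add: psi_def)

lemma phi_perspective:
  assumes "0 < a" "0 < b"
  shows "b * phi t (a / b) = (if t = 0 then b * ln (b / a) else if t = 1 then a * ln (a / b)
    else (a powr t * b powr (1 - t) - b) / (t * (t - 1)))"
  using assms by (auto simp: phi_def ln_div powr_divide powr_diff field_simps)

lemma psi_perspective:
  assumes "0 < a" "0 < b"
  shows "b * psi s (a / b) = (if s = 0 then a * ln (2 * a / (a + b))
    else if s = 1 then (a + b) / 2 * ln ((a + b) / (2 * a))
    else (a * ((a + b) / (2 * a)) powr s - b) / (s * (s - 1)))"
proof -
  have ratio_eqs: "2 * (a / b) / (a / b + 1) = 2 * a / (a + b)"
    "(a / b + 1) / (2 * (a / b)) = (a + b) / (2 * a)"
    using assms by (simp_all add: field_simps)
  show ?thesis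
    unfolding psi_def ratio_eqs using assms by (auto simp: field_simps)
qed

lemma Phi_eq_f_divergence:
  assumes p: "p \<in> Gamma n" and q: "q \<in> Gamma n"
  shows "Phi t n p q = f_divergence (phi t) n p q"
proof -
  have "f_divergence (phi t) n p q = (\<Sum>i<n. if t = 0 then q i * ln (q i / p i)
    else if t = 1 then p i * ln (p i / q i) else (p i powr t * q i powr (1 - t) - q i) / (t * (t - 1)))"
    unfolding f_divergence_def using p q by (intro sum.cong) (simp_all add: Gamma_def phi_perspective)
  then show ?thesis
    using q by (auto simp: Phi_def Gamma_def sum_subtractf simp flip: sum_divide_distrib)
qed

lemma Omega_eq_f_divergence:
  assumes p: "p \<in> Gamma n" and q: "q \<in> Gamma n"
  shows "Omega s n p q = f_divergence (psi s) n p q"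
proof -
  have "f_divergence (psi s) n p q = (\<Sum>i<n. if s = 0 then p i * ln (2 * p i / (p i + q i))
    else if s = 1 then (p i + q i) / 2 * ln ((p i + q i) / (2 * p i))
    else (p i * ((p i + q i) / (2 * p i)) powr s - q i) / (s * (s - 1)))"
    unfolding f_divergence_def using p q by (intro sum.cong) (simp_all add: Gamma_def psi_perspective)
  then show ?thesis
    using q by (auto simp: Omega_def Gamma_def sum_subtractf simp flip: sum_divide_distrib)
qed

lemma DERIV_phi:
  assumes "0 < x"
  shows "(phi t has_real_derivative phi' t x) (at x)"
proof -
  consider "t = 0" | "t = 1" | "t \<noteq> 0" "t \<noteq> 1" by blast
  then show ?thesis
  proof cases
    case 1
    then show ?thesis using assms unfolding phi_def[abs_def] phi'_def
      by (auto simp: powr_minus divide_simps intro!: derivative_eq_intros)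
  qed (use assms in \<open>auto simp: phi_def[abs_def] phi'_def intro!: derivative_eq_intros\<close>)
qed

lemma DERIV_phi':
  assumes "0 < x"
  shows "(phi' t has_real_derivative x powr (t - 2)) (at x)"
  using assms unfolding phi'_def[abs_def]
  by (cases "t = 1") (auto simp: powr_minus divide_simps intro!: derivative_eq_intros)

lemma DERIV_psi:
  assumes x: "0 < x"
  shows "(psi s has_real_derivative psi' s x) (at x)"
proof -
  consider "s = 0" | "s = 1" | "s \<noteq> 0" "s \<noteq> 1" by blast
  then show ?thesis
  proof cases
    case 1
    have "0 < x + 1" using x by simp
    with 1 x show ?thesis unfolding psi_def[abs_def] psi'_def
      by (auto intro!: derivative_eq_intros) (simp add: divide_simps; simp add: algebra_simps)
  next
    case 2
    with x show ?thesis unfolding psi_def[abs_def] psi'_def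
      by (auto intro!: derivative_eq_intros)
  next
    case 3
    have split: "((x + 1) / (2 * x)) powr s = ((x + 1) / (2 * x)) powr (s - 1) * ((x + 1) / (2 * x))"
      using x powr_add[of "(x + 1) / (2 * x)" "s - 1" 1] by simp
    from 3 x show ?thesis unfolding psi_def[abs_def] psi'_def
      by (auto intro!: derivative_eq_intros) (unfold split, simp add: field_simps)
  qed
qed

lemma DERIV_psi':
  assumes x: "0 < x"
  shows "(psi' s has_real_derivative ((x + 1) / (2 * x)) powr (s - 2) / (4 * x ^ 3)) (at x)"
proof -
  have x1: "x + 1 \<noteq> 0" using x by simp
  consider "s = 0" | "s = 1" | "s \<noteq> 0" "s \<noteq> 1" by blast
  then show ?thesis
  proof cases
    case 1
    with x show ?thesis unfolding psi'_def[abs_def]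
      by (auto simp: powr_minus intro!: derivative_eq_intros)
        (simp add: divide_simps x1; simp add: algebra_simps power2_eq_square power3_eq_cube)
  next
    case 2
    with x show ?thesis unfolding psi'_def[abs_def]
      by (auto simp: powr_minus intro!: derivative_eq_intros)
        (simp add: divide_simps x1; simp add: algebra_simps power2_eq_square power3_eq_cube)
  next
    case 3
    have split: "((x + 1) / (2 * x)) powr (s - 1) = ((x + 1) / (2 * x)) powr (s - 2) * ((x + 1) / (2 * x))"
      using x powr_add[of "(x + 1) / (2 * x)" "s - 2" 1] by simp
    from 3 x show ?thesis unfolding psi'_def[abs_def]
      by (auto intro!: derivative_eq_intros)
        (unfold split, simp add: divide_simps, simp add: algebra_simps power3_eq_cube)
  qed
qed

definition curvature_ratio :: "real \<Rightarrow> real \<Rightarrow> real \<Rightarrow> real" where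
  "curvature_ratio s t x = 1 / (4 * x powr (t + 1)) * ((x + 1) / (2 * x)) powr (s - 2)"

lemma curvature_ratio_mult_powr:
  assumes "0 < x"
  shows "curvature_ratio s t x * x powr (t - 2) = ((x + 1) / (2 * x)) powr (s - 2) / (4 * x ^ 3)"
proof -
  have "x powr (t + 1) = x powr (t - 2) * x ^ 3"
    using assms powr_add[of x "t - 2" 3] by (simp add: powr_numeral add.commute)
  then show ?thesis
    using assms by (simp add: curvature_ratio_def)
qed

lemma curvature_ratio_factor:
  assumes "0 < x"
  shows "curvature_ratio s t x = ((x + 1) / (2 * x)) powr (s + t - 1) * ((x + 1) / 2) powr (- (t + 1)) / 4"
proof -
  define u where "u = (x + 1) / (2 * x)"
  define v where "v = (x + 1) / 2"
  have "0 < u" "0 < v"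
    using assms by (simp_all add: u_def v_def)
  have "v / u = x"
    using assms by (simp add: u_def v_def field_simps)
  then have x_powr: "x powr (t + 1) = v powr (t + 1) / u powr (t + 1)"
    using \<open>0 < u\<close> \<open>0 < v\<close> by (simp flip: powr_divide)
  have u_powr: "u powr (s + t - 1) = u powr (t + 1) * u powr (s - 2)"
    using powr_add[of u "t + 1" "s - 2"] by (simp add: algebra_simps)
  show ?thesis
    unfolding curvature_ratio_def u_def[symmetric] v_def[symmetric] x_powr u_powr powr_minus_divide
    using \<open>0 < u\<close> \<open>0 < v\<close> by (simp add: field_simps)
qed

lemma curvature_ratio_mono:
  assumes "s + t \<le> 1" "t \<le> -1" "0 < x" "x \<le> y"
  shows "curvature_ratio s t x \<le> curvature_ratio s t y"
proof -
  have "(y + 1) / (2 * y) \<le> (x + 1) / (2 * x)"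
    using assms by (simp add: field_simps)
  then have "((x + 1) / (2 * x)) powr (s + t - 1) \<le> ((y + 1) / (2 * y)) powr (s + t - 1)"
    using assms by (intro powr_mono2') auto
  moreover have "((x + 1) / 2) powr (- (t + 1)) \<le> ((y + 1) / 2) powr (- (t + 1))"
    using assms by (intro powr_mono2) auto
  ultimately show ?thesis
    using assms by (simp add: curvature_ratio_factor mult_mono)
qed

lemma curvature_ratio_antimono:
  assumes "1 \<le> s + t" "-1 \<le> t" "0 < x" "x \<le> y"
  shows "curvature_ratio s t y \<le> curvature_ratio s t x"
proof -
  have "(y + 1) / (2 * y) \<le> (x + 1) / (2 * x)"
    using assms by (simp add: field_simps)
  then have "((y + 1) / (2 * y)) powr (s + t - 1) \<le> ((x + 1) / (2 * x)) powr (s + t - 1)"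
    using assms by (intro powr_mono2) auto
  moreover have "((y + 1) / 2) powr (- (t + 1)) \<le> ((x + 1) / 2) powr (- (t + 1))"
    using assms by (intro powr_mono2') auto
  ultimately show ?thesis
    using assms by (simp add: curvature_ratio_factor mult_mono)
qed

lemma Omega_minus_scaled_Phi:
  assumes "p \<in> Gamma n" "q \<in> Gamma n"
  shows "Omega s n p q - c * Phi t n p q = f_divergence (\<lambda>x. psi s x - c * phi t x) n p q"
  using assms
  by (simp add: Phi_eq_f_divergence Omega_eq_f_divergence f_divergence_def sum_distrib_left
      sum_subtractf right_diff_distrib mult.left_commute)

lemma DERIV_psi_minus_scaled_phi:
  assumes "0 < x"
  shows "((\<lambda>x. psi s x - c * phi t x) has_real_derivative psi' s x - c * phi' t x) (at x)"
  using assms by (intro DERIV_diff DERIV_cmult DERIV_psi DERIV_phi)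

lemma DERIV_psi'_minus_scaled_phi':
  assumes "0 < x"
  shows "((\<lambda>x. psi' s x - c * phi' t x) has_real_derivative
    (curvature_ratio s t x - c) * x powr (t - 2)) (at x)"
  using DERIV_diff[OF DERIV_psi' DERIV_cmult[OF DERIV_phi']] assms
  by (simp add: left_diff_distrib curvature_ratio_mult_powr)

lemma scaled_Phi_le_Omega:
  assumes p: "p \<in> Gamma n" and q: "q \<in> Gamma n"
    and ratio: "\<And>i. i < n \<Longrightarrow> r \<le> p i / q i \<and> p i / q i \<le> R" and "0 < r"
    and c: "\<And>x. x \<in> {r..R} \<Longrightarrow> c \<le> curvature_ratio s t x"
  shows "c * Phi t n p q \<le> Omega s n p q"
proof -
  have "f_divergence (\<lambda>_. 0) n p q \<le> f_divergence (\<lambda>x. psi s x - c * phi t x) n p q"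
    by (rule f_divergence_mono[where f' = "\<lambda>_. 0" and f'' = "\<lambda>_. 0", OF p q ratio])
      (use \<open>0 < r\<close> c in \<open>auto intro: DERIV_psi_minus_scaled_phi DERIV_psi'_minus_scaled_phi'\<close>)
  then show ?thesis
    using Omega_minus_scaled_Phi[OF p q, of s c t] by (simp add: f_divergence_def)
qed

lemma Omega_le_scaled_Phi:
  assumes p: "p \<in> Gamma n" and q: "q \<in> Gamma n"
    and ratio: "\<And>i. i < n \<Longrightarrow> r \<le> p i / q i \<and> p i / q i \<le> R" and "0 < r"
    and c: "\<And>x. x \<in> {r..R} \<Longrightarrow> curvature_ratio s t x \<le> c"
  shows "Omega s n p q \<le> c * Phi t n p q"
proof -
  have "f_divergence (\<lambda>x. psi s x - c * phi t x) n p q \<le> f_divergence (\<lambda>_. 0) n p q"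
    by (rule f_divergence_mono[where g' = "\<lambda>_. 0" and g'' = "\<lambda>_. 0", OF p q ratio])
      (use \<open>0 < r\<close> c in \<open>auto intro: DERIV_psi_minus_scaled_phi DERIV_psi'_minus_scaled_phi'
        simp: mult_nonneg_nonpos2\<close>)
  then show ?thesis
    using Omega_minus_scaled_Phi[OF p q, of s c t] by (simp add: f_divergence_def)
qed

theorem theorem4p1:
  fixes n :: nat and p q :: "nat \<Rightarrow> real" and r R s t :: real
  assumes "n \<ge> 2" and "p \<in> Gamma n" and "q \<in> Gamma n"
    and "0 < r" and "r \<le> R"
    and "\<And>i. i < n \<Longrightarrow> r \<le> p i / q i \<and> p i / q i \<le> R"
  shows "(s + t \<le> 1 \<and> t \<le> -1 \<longrightarrow>
           1 / (4 * r powr (t + 1)) * ((r + 1) / (2 * r)) powr (s - 2) * Phi t n p q \<le> Omega s n p q \<and>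
           Omega s n p q \<le> 1 / (4 * R powr (t + 1)) * ((R + 1) / (2 * R)) powr (s - 2) * Phi t n p q)
       \<and> (s + t \<ge> 1 \<and> t \<ge> -1 \<longrightarrow>
           1 / (4 * R powr (t + 1)) * ((R + 1) / (2 * R)) powr (s - 2) * Phi t n p q \<le> Omega s n p q \<and>
           Omega s n p q \<le> 1 / (4 * r powr (t + 1)) * ((r + 1) / (2 * r)) powr (s - 2) * Phi t n p q)"
proof -
  note lower = scaled_Phi_le_Omega[OF assms(2,3,6,4)]
    and upper = Omega_le_scaled_Phi[OF assms(2,3,6,4)]
  show ?thesis
    unfolding curvature_ratio_def[symmetric]
  proof (intro conjI impI)
    assume "s + t \<le> 1 \<and> t \<le> -1"
    then show "curvature_ratio s t r * Phi t n p q \<le> Omega s n p q"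
      and "Omega s n p q \<le> curvature_ratio s t R * Phi t n p q"
      using \<open>0 < r\<close> by (auto intro!: lower upper curvature_ratio_mono)
  next
    assume "1 \<le> s + t \<and> -1 \<le> t"
    then show "curvature_ratio s t R * Phi t n p q \<le> Omega s n p q"
      and "Omega s n p q \<le> curvature_ratio s t r * Phi t n p q"
      using \<open>0 < r\<close> by (auto intro!: lower upper curvature_ratio_antimono)
  qed
qed

end
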